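(* Let $s\in\mathbb C$ with $\mathrm{Re}\,s>-2$. Then: (1) for every prime $p\ne3$, $$\sum_{k=0}^{\infty}\frac{T(p^k)}{p^{ks}}=\frac{1}{1-p^{-(3s+6)}}\Big(1+\frac{1}{p^{s+7}}\sum_{c=1}^{p-1}|S(p,c)|^6+\frac{p-1}{p^{2s+7}}-\frac{1}{p^{3s+7}}\Big);$$ (2) $$\sum_{k=0}^{\infty}\frac{T(3^k)}{3^{ks}}=\frac{1}{1-3^{-(3s+6)}}\Big(1+\frac{1}{3^{2s+14}}\sum_{\substack{c=1\\(c,3)=1}}^{9}|S(9,c)|^6-\frac{1}{3^{3s+7}}\Big),$$ the series converging absolutely.
   Context: Write $e(\alpha)=e^{2\pi i\alpha}$. For integers $q\ge1$ and $c$, $S(q,c)=\sum_{m=1}^{q}e(cm^3/q)$, and $T(q)=q^{-7}\sum_{1\le c\le q,(c,q)=1}|S(q,c)|^6$. *)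

theory Defs
  imports "HOL-Analysis.Analysis" "HOL-Computational_Algebra.Primes"
begin

definition e :: "real \<Rightarrow> complex" where
  "e \<alpha> = exp (2 * of_real pi * \<i> * of_real \<alpha>)"

definition S :: "nat \<Rightarrow> int \<Rightarrow> complex" where
  "S q c = (\<Sum>m = 1..q. e (of_int c * (of_nat m) ^ 3 / of_nat q))"

definition T :: "nat \<Rightarrow> real" where
  "T q = (of_nat q) powi (-7) *
     (\<Sum>c \<in> {c. 1 \<le> c \<and> c \<le> int q \<and> coprime c (int q)}. (cmod (S q c)) ^ 6)"

end

(*
  Splitting m = x + p^(n-j) y (with j = 1, or j = 2 when p = 3) and summing over y the
  additive character that appears, one finds S(p^n, c) = p^2 S(p^(n-3), c) for n \<ge> 3 and
  p not dividing c; averaging over c gives T(p^(n+3)) = T(p^n) / p^6 for n \<ge> 1. Hence, after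
  the constant term, the local series is a sum of three geometric progressions with ratio
  p^-(3s+6), which converge for Re s > -2, and only T(p), T(p^2), T(p^3) remain to be computed:
  T(p^3) = (p-1)/p^7 for every p and T(p^2) = (p-1)/p^7 for p \<noteq> 3, while T(3) = 0 because
  c m^3 \<equiv> c m (mod 3).
*)
theory Submission
  imports Defs
begin

lemma e_add: "e (a + b) = e a * e b"
  unfolding e_def by (simp add: distrib_left exp_add)

lemma e_of_int: "e (of_int k) = 1"
proof -
  have "2 * of_real pi * \<i> * of_real (of_int k) = \<i> * (of_int k * (of_real pi * 2))"
    by (simp add: mult_ac)
  then show ?thesis unfolding e_def by (simp only: exp_2pi_1_int)
qed

lemma e_of_nat_mult: "e (of_nat n * a) = e a ^ n"
  unfolding e_def by (simp add: mult_ac flip: exp_of_nat_mult)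

lemma e_eq_1_imp_Ints: "e a = 1 \<Longrightarrow> a \<in> \<int>"
  unfolding e_def exp_eq_1 by (auto simp: Ints_def)

definition addchar :: "nat \<Rightarrow> int \<Rightarrow> complex" where
  "addchar q t = e (of_int t / of_nat q)"

lemma addchar_add: "addchar q (a + b) = addchar q a * addchar q b"
  unfolding addchar_def by (simp add: add_divide_distrib e_add)

lemma addchar_0 [simp]: "addchar q 0 = 1"
  unfolding addchar_def e_def by simp

lemma addchar_mult_of_nat: "addchar q (a * int y) = addchar q a ^ y"
  unfolding addchar_def using e_of_nat_mult[of y "of_int a / of_nat q"] by (simp add: mult_ac)

lemma addchar_cong:
  assumes "q > 0" "int q dvd t - u"
  shows "addchar q t = addchar q u"
proof -
  obtain k where "t = u + int q * k" using assms(2) by (metis dvdE add_diff_cancel_left' diff_add_cancel)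
  then have "addchar q t = addchar q u * e (of_int k)"
    unfolding addchar_def using assms(1) by (simp add: add_divide_distrib e_add)
  then show ?thesis by (simp add: e_of_int)
qed

lemma addchar_eq_1: "q > 0 \<Longrightarrow> int q dvd t \<Longrightarrow> addchar q t = 1"
  using addchar_cong[of q t 0] by simp

lemma addchar_mult_modulus: "p > 0 \<Longrightarrow> addchar (p * q) (int p * t) = addchar q t"
  unfolding addchar_def by simp

lemma sum_addchar:
  assumes "N > 0"
  shows "(\<Sum>y<N. addchar N (a * int y)) = (if int N dvd a then of_nat N else 0)"
proof (cases "int N dvd a")
  case True
  then show ?thesis using assms by (simp add: addchar_eq_1)
next
  case False
  have "addchar N a \<noteq> 1"
  proof
    assume "addchar N a = 1"
    then obtain k where "of_int a / of_nat N = (of_int k :: real)"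
      unfolding addchar_def by (auto dest!: e_eq_1_imp_Ints elim!: Ints_cases)
    then have "of_int a = (of_int (int N * k) :: real)" using assms by (simp add: field_simps)
    then have "a = int N * k" by linarith
    then show False using False by simp
  qed
  moreover have "addchar N a ^ N = 1"
    using assms by (simp add: addchar_eq_1 flip: addchar_mult_of_nat)
  ultimately show ?thesis using False by (simp add: addchar_mult_of_nat sum_gp_strict)
qed

lemma sum_lessThan_mult_split:
  fixes f :: "nat \<Rightarrow> 'a::comm_monoid_add"
  assumes "A > 0"
  shows "(\<Sum>m<A * B. f m) = (\<Sum>x<A. \<Sum>y<B. f (x + A * y))"
proof -
  have "bij_betw (\<lambda>(x, y). x + A * y) ({..<A} \<times> {..<B}) {..<A * B}"
  proof (rule bij_betwI[where g = "\<lambda>m. (m mod A, m div A)"])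
    have "x + A * y < A * B" if "x < A" "y < B" for x y
    proof -
      have "x + A * y < A * Suc y" using that by simp
      also have "\<dots> \<le> A * B" using that by (intro mult_le_mono2) simp
      finally show ?thesis .
    qed
    then show "(\<lambda>(x, y). x + A * y) \<in> {..<A} \<times> {..<B} \<rightarrow> {..<A * B}" by auto
    show "(\<lambda>m. (m mod A, m div A)) \<in> {..<A * B} \<rightarrow> {..<A} \<times> {..<B}"
      using assms by (auto simp: less_mult_imp_div_less mult.commute)
  qed (use assms in auto)
  then have "(\<Sum>m<A * B. f m) = (\<Sum>(x, y)\<in>{..<A} \<times> {..<B}. f (x + A * y))"
    by (simp add: sum.reindex_bij_betw [symmetric] split_def)
  then show ?thesis by (simp add: sum.cartesian_product split_def)
qed

lemma sum_lessThan_mult_periodic: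
  fixes f :: "nat \<Rightarrow> 'a::semiring_1"
  assumes "q > 0" "\<And>x y. f (x + q * y) = f x"
  shows "(\<Sum>m<q * B. f m) = of_nat B * (\<Sum>m<q. f m)"
  using sum_lessThan_mult_split [OF assms(1), of f B] by (simp add: assms(2) sum_distrib_left)

lemma sum_multiples_lessThan:
  fixes f :: "nat \<Rightarrow> 'a::comm_monoid_add"
  assumes "p > 0"
  shows "(\<Sum>x<p * M. if p dvd x then f x else 0) = (\<Sum>z<M. f (p * z))"
proof -
  have "{x \<in> {..<p * M}. p dvd x} = (*) p ` {..<M}"
    using assms by (auto elim!: dvdE)
  moreover have "inj_on ((*) p) {..<M}" using assms by (simp add: inj_on_def)
  ultimately show ?thesis by (simp add: sum.inter_filter [symmetric] sum.reindex)
qed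

lemma S_eq_sum_addchar:
  assumes "q > 0"
  shows "S q c = (\<Sum>m<q. addchar q (c * int m ^ 3))"
proof -
  define f where "f m = addchar q (c * int m ^ 3)" for m
  obtain q' where q: "q = Suc q'" using assms by (cases q) auto
  have "f q = f 0" unfolding f_def using assms by (intro addchar_cong) (auto simp: power3_eq_cube)
  have "S q c = (\<Sum>m = Suc 0..q. f m)" unfolding S_def f_def addchar_def by simp
  also have "\<dots> = (\<Sum>m<q'. f (Suc m)) + f q" by (simp add: sum.atLeast1_atMost_eq q)
  also have "\<dots> = f 0 + (\<Sum>m<q'. f (Suc m))" using \<open>f q = f 0\<close> by (simp add: add.commute)
  also have "\<dots> = (\<Sum>m<q. f m)" unfolding q by (rule sum.lessThan_Suc_shift [symmetric])
  finally show ?thesis unfolding f_def .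
qed

lemma sum_addchar_cube_mult_modulus:
  assumes "q > 0"
  shows "(\<Sum>m<q * B. addchar q (c * int m ^ 3)) = of_nat B * S q c"
proof -
  have "addchar q (c * int (x + q * y) ^ 3) = addchar q (c * int x ^ 3)" for x y
  proof (rule addchar_cong [OF assms])
    have "c * int (x + q * y) ^ 3 - c * int x ^ 3
        = int q * (c * (3 * int x ^ 2 * int y + 3 * int x * int q * int y ^ 2 + int q ^ 2 * int y ^ 3))"
      by (simp add: algebra_simps power2_eq_square power3_eq_cube)
    then show "int q dvd c * int (x + q * y) ^ 3 - c * int x ^ 3" by simp
  qed
  then show ?thesis by (simp add: sum_lessThan_mult_periodic assms S_eq_sum_addchar)
qed

lemma S_add_mult_modulus:
  assumes "q > 0"
  shows "S q (c + int q * k) = S q c"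
proof -
  have "(c + int q * k) * int m ^ 3 - c * int m ^ 3 = int q * (k * int m ^ 3)" for m
    by (simp add: algebra_simps)
  then have "addchar q ((c + int q * k) * int m ^ 3) = addchar q (c * int m ^ 3)" for m
    using assms by (intro addchar_cong) simp_all
  then show ?thesis by (simp add: S_eq_sum_addchar [OF assms])
qed

lemma S_1: "S 1 c = 1"
  unfolding S_def by (simp add: e_of_int)

text \<open>Write \<open>m = x + p^(n-j) y\<close>. Under the hypotheses on \<open>p^n\<close>,
  \<open>c m^3 \<equiv> c x^3 + p^(n-j) 3 c x^2 y (mod p^n)\<close>, so the sum over \<open>y\<close> is a complete character
  sum modulo \<open>p^j\<close>, which vanishes unless \<open>p\<close> divides \<open>x\<close>.\<close>
lemma S_prime_power_eq_sum:
  fixes c :: int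
  assumes p: "prime p" and "j < n"
    and dvd_square: "int p ^ n dvd 3 * int p ^ (2 * (n - j))"
    and dvd_cube: "int p ^ n dvd int p ^ (3 * (n - j))"
    and dvd_derivative: "\<And>x. int p ^ j dvd 3 * c * x ^ 2 \<longleftrightarrow> int p dvd x"
  shows "S (p ^ n) c = of_nat (p ^ j) * (\<Sum>z<p ^ (n - j - 1). addchar (p ^ n) (c * int (p * z) ^ 3))"
proof -
  have p0: "p > 0" using p prime_gt_0_nat by blast
  define L where "L = p ^ (n - j)"
  have L0: "L > 0" unfolding L_def using p0 by simp
  have pn: "p ^ n = L * p ^ j" unfolding L_def using \<open>j < n\<close> by (simp flip: power_add)
  have "n - j = Suc (n - j - 1)" using \<open>j < n\<close> by simp
  then have L: "L = p * p ^ (n - j - 1)" unfolding L_def by (metis power_Suc)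
  have expand: "addchar (p ^ n) (c * int (x + L * y) ^ 3)
      = addchar (p ^ n) (c * int x ^ 3) * addchar (p ^ j) (3 * c * int x ^ 2 * int y)" for x y
  proof -
    have "int L ^ 2 = int p ^ (2 * (n - j))" "int L ^ 3 = int p ^ (3 * (n - j))"
      unfolding L_def by (simp_all add: mult.commute flip: power_mult)
    then have "int (p ^ n) dvd 3 * int L ^ 2" "int (p ^ n) dvd int L ^ 3"
      using dvd_square dvd_cube by simp_all
    then have "int (p ^ n) dvd c * int x * int y ^ 2 * (3 * int L ^ 2) + c * int y ^ 3 * int L ^ 3"
      by (metis dvd_add dvd_mult)
    moreover have "c * int (x + L * y) ^ 3 - (c * int x ^ 3 + int L * (3 * c * int x ^ 2 * int y))
        = c * int x * int y ^ 2 * (3 * int L ^ 2) + c * int y ^ 3 * int L ^ 3"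
      by (simp add: algebra_simps power2_eq_square power3_eq_cube)
    ultimately have "addchar (p ^ n) (c * int (x + L * y) ^ 3)
        = addchar (p ^ n) (c * int x ^ 3 + int L * (3 * c * int x ^ 2 * int y))"
      using p0 by (intro addchar_cong) simp_all
    then show ?thesis by (simp add: addchar_add pn addchar_mult_modulus [OF L0])
  qed
  have "S (p ^ n) c = (\<Sum>x<L. \<Sum>y<p ^ j. addchar (p ^ n) (c * int (x + L * y) ^ 3))"
    using p0 L0 by (simp add: S_eq_sum_addchar pn sum_lessThan_mult_split [OF L0])
  also have "\<dots> = (\<Sum>x<L. addchar (p ^ n) (c * int x ^ 3)
                        * (\<Sum>y<p ^ j. addchar (p ^ j) (3 * c * int x ^ 2 * int y)))"
    by (simp only: expand sum_distrib_left)
  also have "\<dots> = of_nat (p ^ j) * (\<Sum>x<p * p ^ (n - j - 1).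
                    if p dvd x then addchar (p ^ n) (c * int x ^ 3) else 0)"
    using p0 dvd_derivative
    by (auto simp: sum_addchar sum_distrib_left L simp flip: int_dvd_int_iff intro!: sum.cong)
  finally show ?thesis using p0 by (simp add: sum_multiples_lessThan)
qed

lemma S_prime_power_reduce:
  fixes c :: int
  assumes p: "prime p" and "j \<le> 2" "3 \<le> n"
    and "int p ^ n dvd 3 * int p ^ (2 * (n - j))"
    and "int p ^ n dvd int p ^ (3 * (n - j))"
    and "\<And>x. int p ^ j dvd 3 * c * x ^ 2 \<longleftrightarrow> int p dvd x"
  shows "S (p ^ n) c = of_nat (p ^ 2) * S (p ^ (n - 3)) c"
proof -
  have p0: "p > 0" using p prime_gt_0_nat by blast
  have pn: "p ^ n = p ^ 3 * p ^ (n - 3)" using \<open>3 \<le> n\<close> by (simp flip: power_add)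
  have "n - j - 1 = (n - 3) + (2 - j)" using assms(2,3) by simp
  then have "p ^ (n - j - 1) = p ^ (n - 3) * p ^ (2 - j)" by (simp only: power_add)
  moreover have "addchar (p ^ n) (c * int (p * z) ^ 3) = addchar (p ^ (n - 3)) (c * int z ^ 3)" for z
    using addchar_mult_modulus [of "p ^ 3" "p ^ (n - 3)" "c * int z ^ 3"] p0
    by (simp add: pn power_mult_distrib algebra_simps)
  ultimately have "S (p ^ n) c = of_nat (p ^ j) * (of_nat (p ^ (2 - j)) * S (p ^ (n - 3)) c)"
    using S_prime_power_eq_sum [OF assms(1) _ assms(4-6)] assms(2,3) p0
    by (simp add: sum_addchar_cube_mult_modulus)
  also have "\<dots> = of_nat (p ^ 2) * S (p ^ (n - 3)) c"
    using assms(2) by (simp flip: power_add)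
  finally show ?thesis .
qed

lemma prime_dvd_3_mult_square_iff:
  assumes "prime p" "p \<noteq> 3" "\<not> int p dvd c"
  shows "int p dvd 3 * c * x ^ 2 \<longleftrightarrow> int p dvd x"
proof -
  have "\<not> p dvd 3" using primes_dvd_imp_eq [of p 3] assms(1,2) by auto
  then have "\<not> int p dvd 3" by presburger
  then show ?thesis using assms by (simp add: prime_dvd_mult_iff prime_dvd_power_iff)
qed

lemma S_prime_power_recurrence:
  assumes p: "prime p" and "\<not> int p dvd c" "3 \<le> n"
  shows "S (p ^ n) c = of_nat (p ^ 2) * S (p ^ (n - 3)) c"
proof (cases "p = 3")
  case True
  have "(3::int) ^ 2 dvd 3 * c * x ^ 2 \<longleftrightarrow> 3 dvd c * x ^ 2" for x :: int
    using dvd_times_left_cancel_iff [of 3 3 "c * x ^ 2"] by (simp add: power2_eq_square mult.assoc)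
  then have "int 3 ^ 2 dvd 3 * c * x ^ 2 \<longleftrightarrow> int 3 dvd x" for x
    using assms(2) True by (simp add: prime_dvd_mult_iff prime_dvd_power_iff)
  moreover have "int 3 ^ n dvd 3 * int 3 ^ (2 * (n - 2))"
    using le_imp_power_dvd [of n "Suc (2 * (n - 2))" "3::int"] assms(3) by simp
  ultimately show ?thesis
    using assms True by (intro S_prime_power_reduce [of _ 2]) (simp_all add: le_imp_power_dvd)
next
  case False
  show ?thesis
    using assms prime_dvd_3_mult_square_iff [OF p False assms(2)]
    by (intro S_prime_power_reduce [of _ 1]) (simp_all add: le_imp_power_dvd)
qed

lemma S_prime_square:
  assumes "prime p" "p \<noteq> 3" "\<not> int p dvd c"
  shows "S (p ^ 2) c = of_nat p"
  using S_prime_power_eq_sum [of p 1 2 c] prime_dvd_3_mult_square_iff [OF assms]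
  by (simp add: assms(1) le_imp_power_dvd)

lemma S_3:
  assumes "\<not> 3 dvd c"
  shows "S 3 c = 0"
proof -
  have "3 dvd x ^ 3 - x" for x :: int
  proof -
    have "x mod 3 \<in> {0, 1, 2}" by auto
    then have "(x mod 3) ^ 3 mod 3 = x mod 3" by auto
    then show ?thesis by (simp add: mod_eq_dvd_iff power_mod)
  qed
  then have "addchar 3 (c * int m ^ 3) = addchar 3 (c * int m)" for m
    by (intro addchar_cong) (simp_all flip: right_diff_distrib)
  then show ?thesis using assms sum_addchar [of 3 c] by (simp add: S_eq_sum_addchar)
qed

lemma T_eq: "T q = (\<Sum>c \<in> {c. 1 \<le> c \<and> c \<le> int q \<and> coprime c (int q)}. cmod (S q c) ^ 6) / real q ^ 7"
  unfolding T_def by (simp add: power_int_minus field_simps)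

lemma coprime_prime_power_iff:
  fixes c p :: int
  assumes "prime p" "n > 0"
  shows "coprime c (p ^ n) \<longleftrightarrow> \<not> p dvd c"
proof -
  have "coprime c (p ^ n) \<longleftrightarrow> coprime c p" using assms(2) by simp
  also have "\<dots> \<longleftrightarrow> \<not> p dvd c"
    using assms(1) prime_imp_coprime [of p c] not_coprimeI [of p c p] not_prime_unit [of p]
    by (auto simp: coprime_commute)
  finally show ?thesis .
qed

lemma reduced_residues_prime_power:
  assumes p: "prime p" and "n > 0"
  shows "{c. 1 \<le> c \<and> c \<le> int (p ^ n) \<and> coprime c (int (p ^ n))} = int ` {m \<in> {..<p ^ n}. \<not> p dvd m}"
proof -
  have coprime_iff: "coprime c (int (p ^ n)) \<longleftrightarrow> \<not> int p dvd c" for c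
    using coprime_prime_power_iff [of "int p" n c] assms by simp
  have "p dvd p ^ n" using \<open>n > 0\<close> by simp
  show ?thesis
  proof (intro set_eqI iffI)
    fix c assume "c \<in> {c. 1 \<le> c \<and> c \<le> int (p ^ n) \<and> coprime c (int (p ^ n))}"
    then have c: "1 \<le> c" "c \<le> int (p ^ n)" "\<not> p dvd nat c"
      using coprime_iff [of c] by (auto simp flip: int_dvd_int_iff)
    then have "nat c \<le> p ^ n" by (simp add: nat_le_iff)
    then have "nat c < p ^ n" using c(3) \<open>p dvd p ^ n\<close> by (cases "nat c = p ^ n") auto
    then show "c \<in> int ` {m \<in> {..<p ^ n}. \<not> p dvd m}" using c by (intro image_eqI [of _ _ "nat c"]) auto
  next
    fix c assume "c \<in> int ` {m \<in> {..<p ^ n}. \<not> p dvd m}"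
    then obtain m where "c = int m" "m < p ^ n" "\<not> p dvd m" by auto
    moreover have "m \<noteq> 0" using \<open>\<not> p dvd m\<close> by (rule contrapos_nn) simp
    ultimately show "c \<in> {c. 1 \<le> c \<and> c \<le> int (p ^ n) \<and> coprime c (int (p ^ n))}"
      using coprime_iff [of c] by simp
  qed
qed

lemma sum_reduced_residues_prime_power:
  assumes "prime p" "n > 0"
  shows "(\<Sum>c \<in> {c. 1 \<le> c \<and> c \<le> int (p ^ n) \<and> coprime c (int (p ^ n))}. g c)
       = (\<Sum>m<p ^ n. if p dvd m then 0 else g (int m))"
proof -
  have "(\<Sum>c \<in> {c. 1 \<le> c \<and> c \<le> int (p ^ n) \<and> coprime c (int (p ^ n))}. g c)
      = (\<Sum>m \<in> {m \<in> {..<p ^ n}. \<not> p dvd m}. g (int m))"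
    unfolding reduced_residues_prime_power [OF assms] by (simp add: sum.reindex)
  also have "\<dots> = (\<Sum>m<p ^ n. if \<not> p dvd m then g (int m) else 0)"
    by (rule sum.inter_filter) simp
  also have "\<dots> = (\<Sum>m<p ^ n. if p dvd m then 0 else g (int m))"
    by (intro sum.cong) auto
  finally show ?thesis .
qed

lemma sum_nonmultiples_lessThan:
  assumes p0: "p > 0" and "n > 0"
  shows "(\<Sum>m<p ^ n. if p dvd m then 0 else 1 :: real) = (real p - 1) * real p ^ (n - 1)"
proof -
  have pn: "p ^ n = p * p ^ (n - 1)" using assms(2) by (simp flip: power_Suc)
  have "(\<Sum>m<p ^ n. if p dvd m then 0 else 1 :: real) = (\<Sum>m<p ^ n. 1 - (if p dvd m then 1 else 0))"
    by (intro sum.cong) auto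
  also have "\<dots> = real (p ^ n) - (\<Sum>m<p * p ^ (n - 1). if p dvd m then 1 else 0)"
    by (simp add: sum_subtractf pn)
  also have "\<dots> = real (p * p ^ (n - 1)) - real (p ^ (n - 1))"
    using p0 by (simp add: sum_multiples_lessThan pn)
  also have "\<dots> = (real p - 1) * real p ^ (n - 1)"
    by (simp add: algebra_simps)
  finally show ?thesis .
qed

lemma T_1: "T 1 = 1"
proof -
  have "{c::int. 1 \<le> c \<and> c \<le> 1 \<and> coprime c 1} = {1}" by auto
  then show ?thesis using S_1 [of 1] by (simp add: T_eq)
qed

lemma T_prime:
  assumes "prime p"
  shows "T p = (\<Sum>c = 1..int p - 1. cmod (S p c) ^ 6) / real p ^ 7"
proof -
  have "1 \<le> c \<and> c \<le> int p \<and> coprime c (int p) \<longleftrightarrow> c \<in> {1..int p - 1}" for c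
  proof -
    have "coprime c (int p) \<longleftrightarrow> \<not> int p dvd c"
      using coprime_prime_power_iff [of "int p" 1 c] assms by simp
    moreover have "\<not> int p dvd c" if "1 \<le> c" "c < int p"
      using that zdvd_not_zless [of c "int p"] by simp
    ultimately show ?thesis by (cases "c = int p") auto
  qed
  then have "{c. 1 \<le> c \<and> c \<le> int p \<and> coprime c (int p)} = {1..int p - 1}"
    by blast
  then show ?thesis by (simp add: T_eq)
qed

lemma T_3: "T 3 = 0"
proof -
  have "coprime c 3 \<Longrightarrow> \<not> 3 dvd c" for c :: int
    using coprime_prime_power_iff [of 3 1 c] by simp
  then show ?thesis by (simp add: T_eq S_3)
qed

lemma T_9: "T 9 = (\<Sum>c \<in> {c. 1 \<le> c \<and> c \<le> 9 \<and> coprime c 3}. cmod (S 9 c) ^ 6) / 3 ^ 14"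
proof -
  have "coprime c (9::int) \<longleftrightarrow> coprime c 3" for c
    using coprime_power_right_iff [of c 3 2] by simp
  then show ?thesis by (simp add: T_eq)
qed

lemma T_prime_power_const:
  assumes p: "prime p" and "n > 0"
    and const: "\<And>c. \<not> int p dvd c \<Longrightarrow> cmod (S (p ^ n) c) ^ 6 = K"
  shows "T (p ^ n) = K * (real p - 1) * real p ^ (n - 1) / real p ^ (7 * n)"
proof -
  have "(\<Sum>c \<in> {c. 1 \<le> c \<and> c \<le> int (p ^ n) \<and> coprime c (int (p ^ n))}. cmod (S (p ^ n) c) ^ 6)
      = (\<Sum>m<p ^ n. K * (if p dvd m then 0 else 1))"
    unfolding sum_reduced_residues_prime_power [OF assms(1,2)]
    using const by (intro sum.cong) (simp_all flip: int_dvd_int_iff)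
  also have "\<dots> = K * (real p - 1) * real p ^ (n - 1)"
    using prime_gt_0_nat [OF p] \<open>n > 0\<close> by (simp add: sum_distrib_left [symmetric] sum_nonmultiples_lessThan)
  moreover have "real (p ^ n) ^ 7 = real p ^ (7 * n)"
    by (simp add: mult.commute flip: power_mult)
  ultimately show ?thesis by (simp add: T_eq)
qed

lemma T_prime_square:
  assumes "prime p" "p \<noteq> 3"
  shows "T (p ^ 2) = (real p - 1) / real p ^ 7"
proof -
  have "T (p ^ 2) = real p ^ 6 * (real p - 1) * real p / real p ^ 14"
    using T_prime_power_const [of p 2 "real p ^ 6"] S_prime_square [OF assms] assms
    by (simp add: norm_power)
  also have "\<dots> = (real p - 1) / real p ^ 7"
    using assms(1) prime_gt_0_nat [of p] by (simp add: eval_nat_numeral field_simps)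
  finally show ?thesis .
qed

lemma T_prime_cube:
  assumes "prime p"
  shows "T (p ^ 3) = (real p - 1) / real p ^ 7"
proof -
  have "cmod (S (p ^ 3) c) ^ 6 = real p ^ 12" if "\<not> int p dvd c" for c
    using S_prime_power_recurrence [OF assms that, of 3] S_1 [of c]
    by (simp add: norm_mult norm_power flip: power_mult)
  then have "T (p ^ 3) = real p ^ 12 * (real p - 1) * real p ^ 2 / real p ^ 21"
    using T_prime_power_const [of p 3 "real p ^ 12"] assms by simp
  also have "\<dots> = (real p - 1) / real p ^ 7"
    using assms prime_gt_0_nat [of p] by (simp add: eval_nat_numeral field_simps)
  finally show ?thesis .
qed

lemma T_prime_power_recurrence:
  assumes p: "prime p" and "n > 0"
  shows "T (p ^ (n + 3)) = T (p ^ n) / real p ^ 6"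
proof -
  have p0: "p > 0" using p prime_gt_0_nat by blast
  have "0 < n + 3" by simp
  define g where "g m = (if p dvd m then 0 else cmod (S (p ^ n) (int m)) ^ 6)" for m
  have "g (x + p ^ n * y) = g x" for x y
  proof -
    have "p dvd x + p ^ n * y \<longleftrightarrow> p dvd x" using \<open>n > 0\<close> by (simp add: dvd_add_left_iff)
    moreover have "S (p ^ n) (int (x + p ^ n * y)) = S (p ^ n) (int x)"
      using S_add_mult_modulus [of "p ^ n" "int x" "int y"] p0 by simp
    ultimately show ?thesis unfolding g_def by simp
  qed
  then have periodic: "(\<Sum>m<p ^ n * p ^ 3. g m) = real (p ^ 3) * (\<Sum>m<p ^ n. g m)"
    using p0 by (simp add: sum_lessThan_mult_periodic)
  have "cmod (S (p ^ (n + 3)) c) ^ 6 = real p ^ 12 * cmod (S (p ^ n) c) ^ 6" if "\<not> int p dvd c" for c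
    using S_prime_power_recurrence [OF p that, of "n + 3"]
    by (simp add: norm_mult norm_power power_mult_distrib flip: power_mult)
  then have "(\<Sum>c \<in> {c. 1 \<le> c \<and> c \<le> int (p ^ (n + 3)) \<and> coprime c (int (p ^ (n + 3)))}. cmod (S (p ^ (n + 3)) c) ^ 6)
      = (\<Sum>m<p ^ (n + 3). real p ^ 12 * g m)"
    unfolding sum_reduced_residues_prime_power [OF p \<open>0 < n + 3\<close>] g_def
    by (intro sum.cong) (simp_all flip: int_dvd_int_iff)
  also have "\<dots> = (\<Sum>m<p ^ n * p ^ 3. real p ^ 12 * g m)" by (simp add: power_add)
  also have "\<dots> = real p ^ 12 * real p ^ 3 * (\<Sum>m<p ^ n. g m)"
    by (simp add: sum_distrib_left [symmetric] periodic)
  also have "(\<Sum>m<p ^ n. g m) = (\<Sum>c \<in> {c. 1 \<le> c \<and> c \<le> int (p ^ n) \<and> coprime c (int (p ^ n))}. cmod (S (p ^ n) c) ^ 6)"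
    unfolding g_def by (rule sum_reduced_residues_prime_power [OF p \<open>n > 0\<close>, symmetric])
  moreover have "real (p ^ (n + 3)) ^ 7 = real (p ^ n) ^ 7 * real p ^ 6 * (real p ^ 12 * real p ^ 3)"
    by (simp add: power_mult_distrib add.commute flip: power_add power_mult)
  ultimately show ?thesis
    using p0 by (simp add: T_eq)
qed

lemma sum_lessThan_add3: "(\<Sum>k<n + 3. f k) = f 0 + f 1 + f 2 + (\<Sum>k<n. f (k + 3))"
  for f :: "nat \<Rightarrow> 'a::comm_monoid_add"
  by (induction n) (simp_all add: numeral_3_eq_3 numeral_2_eq_2 add_ac)

lemma summable_sums_lag3_recurrence:
  fixes a :: "nat \<Rightarrow> 'a::{real_normed_field, banach}"
  assumes rec: "\<And>k. a (k + 4) = r * a (k + 1)" and r: "norm r < 1"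
  shows "summable (\<lambda>k. norm (a k)) \<and> a sums ((a 0 + a 1 + a 2 + a 3 - r * a 0) / (1 - r))"
proof -
  define b where "b k = norm (a (Suc k))" for k
  have b_rec: "b (k + 3) = norm r * b k" for k
    using rec [of k] unfolding b_def by (simp add: norm_mult add.commute [of 4])
  define B where "B = b 0 + b 1 + b 2"
  have bound: "(\<Sum>k<3 * N. b k) \<le> B / (1 - norm r)" for N
  proof (induction N)
    case 0
    then show ?case using r unfolding B_def b_def by simp
  next
    case (Suc N)
    have "(\<Sum>k<3 * Suc N. b k) = (\<Sum>k<3 * N + 3. b k)" by (simp add: add.commute)
    also have "\<dots> = B + norm r * (\<Sum>k<3 * N. b k)"
      by (simp only: sum_lessThan_add3) (simp add: B_def b_rec sum_distrib_left)
    also have "\<dots> \<le> B + norm r * (B / (1 - norm r))"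
      using Suc.IH by (intro add_left_mono mult_left_mono) auto
    also have "\<dots> = B / (1 - norm r)" using r by (simp add: field_simps)
    finally show ?case .
  qed
  have "summable b"
  proof (rule summableI_nonneg_bounded)
    show "(\<Sum>k<n. b k) \<le> B / (1 - norm r)" for n
      using sum_mono2 [of "{..<3 * n}" "{..<n}" b] bound [of n] by (force simp: b_def)
  qed (simp add: b_def)
  then have norm_summable: "summable (\<lambda>k. norm (a k))"
    unfolding b_def by (subst (asm) summable_Suc_iff)
  then have "summable a" by (rule summable_norm_cancel)
  define A where "A = suminf a"
  have "A = (\<Sum>k. a (k + 4)) + (\<Sum>k<4. a k)"
    unfolding A_def by (rule suminf_split_initial_segment [OF \<open>summable a\<close>])
  also have "(\<Sum>k. a (k + 4)) = r * (\<Sum>k. a (k + 1))"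
    using summable_ignore_initial_segment [OF \<open>summable a\<close>, of 1] by (simp add: rec suminf_mult)
  also have "(\<Sum>k. a (k + 1)) = A - a 0"
    using suminf_split_initial_segment [OF \<open>summable a\<close>, of 1] unfolding A_def by simp
  finally have "A = r * (A - a 0) + (a 0 + a 1 + a 2 + a 3)"
    by (simp add: numeral_eq_Suc add_ac)
  moreover have "1 - r \<noteq> 0" using r by auto
  ultimately have "A = (a 0 + a 1 + a 2 + a 3 - r * a 0) / (1 - r)"
    by (simp add: field_simps)
  then show ?thesis
    using norm_summable summable_sums [OF \<open>summable a\<close>] unfolding A_def by simp
qed

lemma powr_of_nat_mult:
  fixes x :: complex
  assumes "x \<noteq> 0"
  shows "x powr (of_nat k * s) = (x powr s) ^ k"
  unfolding powr_def using exp_of_nat_mult [of k "s * ln x"] assms by (simp add: mult_ac)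

lemma powr_of_nat_mult_add:
  fixes x :: complex
  assumes "x \<noteq> 0"
  shows "x powr (of_nat k * s + of_nat m) = (x powr s) ^ k * x ^ m"
  using assms by (simp add: powr_add powr_of_nat_mult powr_nat')

lemma T_prime_power_series:
  fixes s :: complex
  assumes p: "prime p" and s: "Re s > -2"
  defines "w \<equiv> of_nat p powr s"
  defines "r \<equiv> 1 / (of_nat p ^ 6 * w ^ 3)"
  shows "summable (\<lambda>k. norm (complex_of_real (T (p ^ k)) / of_nat p powr (of_nat k * s))) \<and>
         (\<lambda>k. complex_of_real (T (p ^ k)) / of_nat p powr (of_nat k * s)) sums
          ((1 + of_real (T p) / w + of_real (T (p ^ 2)) / w ^ 2 + of_real (T (p ^ 3)) / w ^ 3 - r) / (1 - r))"
proof -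
  have p1: "p > 1" using p prime_gt_1_nat by blast
  have p0: "(of_nat p :: complex) \<noteq> 0" using p1 by simp
  have w0: "w \<noteq> 0" unfolding w_def using p0 by (simp add: powr_def)
  define a where "a k = complex_of_real (T (p ^ k)) / of_nat p powr (of_nat k * s)" for k
  have a_eq: "a k = complex_of_real (T (p ^ k)) / w ^ k" for k
    unfolding a_def w_def by (simp add: powr_of_nat_mult [OF p0])
  have "a (k + 4) = r * a (k + 1)" for k
  proof -
    have "T (p ^ (k + 4)) = T (p ^ (k + 1)) / real p ^ 6"
      using T_prime_power_recurrence [OF p, of "k + 1"] by (simp add: add_ac)
    then have T_rec: "complex_of_real (T (p ^ (k + 4))) = complex_of_real (T (p ^ (k + 1))) / of_nat p ^ 6"
      by simp
    have w_pow: "w ^ (k + 4) = w ^ (k + 1) * w ^ 3"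
      by (simp only: power_add [symmetric]) (simp add: add.commute)
    show ?thesis unfolding a_eq r_def T_rec w_pow using w0 p0 by (simp add: field_simps)
  qed
  moreover have "norm r < 1"
  proof -
    have "norm w = real p powr Re s" unfolding w_def by (simp add: norm_powr_real_powr)
    moreover have "1 < real p ^ 2 * real p powr Re s"
      using powr_less_mono [of 0 "2 + Re s" "real p"] p1 s by (simp add: powr_add powr_realpow)
    then have "1 < (real p ^ 2 * real p powr Re s) ^ 3" by (intro one_less_power) auto
    ultimately show ?thesis
      unfolding r_def by (simp add: norm_divide norm_mult norm_power power_mult_distrib flip: power_mult)
  qed
  ultimately have "summable (\<lambda>k. norm (a k)) \<and> a sums ((a 0 + a 1 + a 2 + a 3 - r * a 0) / (1 - r))"
    by (rule summable_sums_lag3_recurrence)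
  moreover have "a 0 = 1" using T_1 by (simp add: a_eq)
  moreover have "a 1 = of_real (T p) / w" "a 2 = of_real (T (p ^ 2)) / w ^ 2"
    "a 3 = of_real (T (p ^ 3)) / w ^ 3"
    by (simp_all add: a_eq)
  ultimately have "summable (\<lambda>k. norm (a k)) \<and> a sums
      ((1 + of_real (T p) / w + of_real (T (p ^ 2)) / w ^ 2 + of_real (T (p ^ 3)) / w ^ 3 - r) / (1 - r))"
    by simp
  then show ?thesis unfolding a_def [abs_def] .
qed

lemma T_euler_factor_prime:
  fixes s :: complex
  assumes p: "prime p" "p \<noteq> 3" and s: "Re s > -2"
  shows "summable (\<lambda>k. norm (complex_of_real (T (p ^ k)) / (of_nat p) powr (of_nat k * s))) \<and>
         (\<lambda>k. complex_of_real (T (p ^ k)) / (of_nat p) powr (of_nat k * s)) sums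
           (1 / (1 - 1 / (of_nat p) powr (3 * s + 6)) *
             (1 + 1 / (of_nat p) powr (s + 7) *
                    (\<Sum>c = 1..int p - 1. complex_of_real ((cmod (S p c)) ^ 6))
                + (of_nat p - 1) / (of_nat p) powr (2 * s + 7)
                - 1 / (of_nat p) powr (3 * s + 7)))"
proof -
  define w where "w = (of_nat p :: complex) powr s"
  define X where "X = (\<Sum>c = 1..int p - 1. complex_of_real ((cmod (S p c)) ^ 6))"
  have p0: "(of_nat p :: complex) \<noteq> 0" using p(1) prime_gt_0_nat by simp
  have w0: "w \<noteq> 0" unfolding w_def using p0 by (simp add: powr_def)
  have powr_p: "(of_nat p :: complex) powr (of_nat k * s + of_nat m) = w ^ k * of_nat p ^ m" for k m
    unfolding w_def by (rule powr_of_nat_mult_add [OF p0])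
  have T_values: "complex_of_real (T p) = X / of_nat p ^ 7"
    "complex_of_real (T (p ^ 2)) = (of_nat p - 1) / of_nat p ^ 7"
    "complex_of_real (T (p ^ 3)) = (of_nat p - 1) / of_nat p ^ 7"
    by (simp_all add: T_prime [OF p(1)] T_prime_square [OF p] T_prime_cube [OF p(1)] X_def of_real_sum)
  have powr_values: "(of_nat p :: complex) powr (3 * s + 6) = of_nat p ^ 6 * w ^ 3"
    "(of_nat p :: complex) powr (s + 7) = w * of_nat p ^ 7"
    "(of_nat p :: complex) powr (2 * s + 7) = w ^ 2 * of_nat p ^ 7"
    "(of_nat p :: complex) powr (3 * s + 7) = w ^ 3 * of_nat p ^ 7"
    using powr_p [of 3 6] powr_p [of 1 7] powr_p [of 2 7] powr_p [of 3 7] by (simp_all add: mult.commute)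
  have "1 + Y / P ^ 7 / w + (P - 1) / P ^ 7 / w ^ 2 + (P - 1) / P ^ 7 / w ^ 3 - 1 / (P ^ 6 * w ^ 3)
      = 1 + 1 / (w * P ^ 7) * Y + (P - 1) / (w ^ 2 * P ^ 7) - 1 / (w ^ 3 * P ^ 7)"
    if "P \<noteq> 0" for P Y :: complex
    using that w0 by (simp add: field_simps) algebra
  then have numerator: "1 + of_real (T p) / w + of_real (T (p ^ 2)) / w ^ 2 + of_real (T (p ^ 3)) / w ^ 3
      - 1 / (of_nat p ^ 6 * w ^ 3)
      = 1 + 1 / (w * of_nat p ^ 7) * X + (of_nat p - 1) / (w ^ 2 * of_nat p ^ 7) - 1 / (w ^ 3 * of_nat p ^ 7)"
    unfolding T_values using p0 by blast
  show ?thesis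
    using T_prime_power_series [OF p(1) s]
    unfolding w_def [symmetric] X_def [symmetric] numerator powr_values
    by (simp only: times_divide_eq_left mult_1_left)
qed

lemma T_euler_factor_3:
  fixes s :: complex
  assumes s: "Re s > -2"
  shows "summable (\<lambda>k. norm (complex_of_real (T (3 ^ k)) / (3::complex) powr (of_nat k * s))) \<and>
         (\<lambda>k. complex_of_real (T (3 ^ k)) / (3::complex) powr (of_nat k * s)) sums
           (1 / (1 - 1 / (3::complex) powr (3 * s + 6)) *
             (1 + 1 / (3::complex) powr (2 * s + 14) *
                    (\<Sum>c \<in> {c::int. 1 \<le> c \<and> c \<le> 9 \<and> coprime c 3}. complex_of_real ((cmod (S 9 c)) ^ 6))
                - 1 / (3::complex) powr (3 * s + 7)))"
proof -
  define w where "w = (3::complex) powr s"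
  define X where "X = (\<Sum>c \<in> {c::int. 1 \<le> c \<and> c \<le> 9 \<and> coprime c 3}. complex_of_real ((cmod (S 9 c)) ^ 6))"
  have w0: "w \<noteq> 0" unfolding w_def by (simp add: powr_def)
  have powr_3: "(3::complex) powr (of_nat k * s + of_nat m) = w ^ k * 3 ^ m" for k m
    unfolding w_def by (rule powr_of_nat_mult_add) simp
  have "T (3 ^ 3) = 2 / 3 ^ 7" using T_prime_cube [of 3] by simp
  then have T_values: "complex_of_real (T 3) = 0"
    "complex_of_real (T (3 ^ 2)) = X / 3 ^ 14" "complex_of_real (T (3 ^ 3)) = 2 / 3 ^ 7"
    by (simp_all only: of_real_divide of_real_power of_real_numeral)
      (simp_all add: T_3 T_9 X_def of_real_sum)
  have powr_values: "(3::complex) powr (3 * s + 6) = 3 ^ 6 * w ^ 3"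
    "(3::complex) powr (2 * s + 14) = w ^ 2 * 3 ^ 14" "(3::complex) powr (3 * s + 7) = w ^ 3 * 3 ^ 7"
    using powr_3 [of 3 6] powr_3 [of 2 14] powr_3 [of 3 7] by (simp_all add: mult.commute)
  have numerator: "1 + of_real (T 3) / w + of_real (T (3 ^ 2)) / w ^ 2 + of_real (T (3 ^ 3)) / w ^ 3
      - 1 / (3 ^ 6 * w ^ 3) = 1 + 1 / (w ^ 2 * 3 ^ 14) * X - 1 / (w ^ 3 * 3 ^ 7)"
    unfolding T_values using w0 by (simp add: field_simps)
  have "prime (3::nat)" by simp
  from T_prime_power_series [OF this s] show ?thesis
    unfolding of_nat_numeral w_def [symmetric] X_def [symmetric] numerator powr_values
    by (simp only: times_divide_eq_left mult_1_left)
qed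

theorem lemma7:
  fixes s :: complex
  assumes "Re s > -2"
  shows "(\<forall>p::nat. prime p \<and> p \<noteq> 3 \<longrightarrow>
            summable (\<lambda>k. norm (complex_of_real (T (p ^ k)) / (of_nat p) powr (of_nat k * s))) \<and>
            (\<lambda>k. complex_of_real (T (p ^ k)) / (of_nat p) powr (of_nat k * s)) sums
              (1 / (1 - 1 / (of_nat p) powr (3 * s + 6)) *
                (1 + 1 / (of_nat p) powr (s + 7) *
                       (\<Sum>c = 1..int p - 1. complex_of_real ((cmod (S p c)) ^ 6))
                   + (of_nat p - 1) / (of_nat p) powr (2 * s + 7)
                   - 1 / (of_nat p) powr (3 * s + 7))))
         \<and>
         (summable (\<lambda>k. norm (complex_of_real (T (3 ^ k)) / (3::complex) powr (of_nat k * s))) \<and>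
          (\<lambda>k. complex_of_real (T (3 ^ k)) / (3::complex) powr (of_nat k * s)) sums
            (1 / (1 - 1 / (3::complex) powr (3 * s + 6)) *
              (1 + 1 / (3::complex) powr (2 * s + 14) *
                     (\<Sum>c \<in> {c::int. 1 \<le> c \<and> c \<le> 9 \<and> coprime c 3}. complex_of_real ((cmod (S 9 c)) ^ 6))
                 - 1 / (3::complex) powr (3 * s + 7))))"
  using T_euler_factor_prime [OF _ _ assms] T_euler_factor_3 [OF assms]
  by (intro conjI allI impI) auto

end
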